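(* Let the points $0,1,2,3\in\mathbb{P}^3(\mathbb{C})$ be represented by the standard basis vectors $e_0,e_1,e_2,e_3$, and let $4=[x_4:y_4:z_4:w_4]$, $5=[x_5:y_5:z_5:w_5]$ be arbitrary. With $X=(x,y,z,w)$ a variable vector, the four quadratic forms $$[015X][234X],\quad [012X][345X],\quad [024X][135X],\quad [045X][123X]$$ are linearly dependent (over $\mathbb{C}$) if and only if $Q=0$, where $$Q=-x_5y_4z_5w_4 + x_4y_5z_5w_4 + x_5y_4z_4w_5 - x_4y_4z_5w_5 .$$
   Context: $[abcX]$ denotes the determinant of the $4\times4$ matrix whose columns are the representative vectors of $a,b,c$ and the variable vector $X$; it is a linear form in $X$ whose zero set is the plane through $a,b,c$ (when these are non-collinear). *)

theory Defs
  imports "HOL-Analysis.Analysis"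
begin

text \<open>Points of P^3(C) are given by representative vectors in C^4, written
  as vector [x,y,z,w].  The bracket [a b c X] is the determinant of the
  4x4 matrix whose columns are a, b, c, X.\<close>

definition bracket :: "complex^4 \<Rightarrow> complex^4 \<Rightarrow> complex^4 \<Rightarrow> complex^4 \<Rightarrow> complex" where
  "bracket a b c X = det (\<chi> i j. ((vector [a, b, c, X]) :: (complex^4)^4) $ j $ i)"

definition lin_dep4 :: "(complex^4 \<Rightarrow> complex) \<Rightarrow> (complex^4 \<Rightarrow> complex) \<Rightarrow>
    (complex^4 \<Rightarrow> complex) \<Rightarrow> (complex^4 \<Rightarrow> complex) \<Rightarrow> bool" where
  "lin_dep4 f1 f2 f3 f4 \<longleftrightarrow> (\<exists>c1 c2 c3 c4 :: complex.
      (c1, c2, c3, c4) \<noteq> (0, 0, 0, 0) \<and>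
      (\<forall>X. c1 * f1 X + c2 * f2 X + c3 * f3 X + c4 * f4 X = 0))"

end

theory Submission
  imports Defs
begin

text \<open>Each of the four products of brackets is a quadratic form in X without square terms,
  so they are linearly dependent iff the 6 x 4 matrix of their coefficients with respect to
  the six mixed monomials has a nontrivial kernel, i.e. iff all fifteen 4 x 4 minors of this
  matrix vanish. Every such minor is Q times a quartic cofactor, and the cofactors have no
  common zero off the hypersurface Q = 0.\<close>

lemma vector_4 [simp]:
  "(vector [x, y, z, w] :: 'a::zero^4) $ 1 = x"
  "(vector [x, y, z, w] :: 'a::zero^4) $ 2 = y"
  "(vector [x, y, z, w] :: 'a::zero^4) $ 3 = z"
  "(vector [x, y, z, w] :: 'a::zero^4) $ 4 = w"
  unfolding vector_def by simp_all

lemma rows_vector_4: "rows (vector [a, b, c, d] :: 'a::zero^'n^4) = {a, b, c, d}"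
proof -
  have "rows (vector [a, b, c, d] :: 'a^'n^4) = range (\<lambda>i. (vector [a, b, c, d] :: 'a^'n^4) $ i)"
    by (auto simp: rows_def row_def vec_lambda_eta)
  then show ?thesis
    by (simp add: UNIV_4)
qed

lemma ex_nonzero_vector_4:
  "(\<exists>c1 c2 c3 c4. (c1, c2, c3, c4) \<noteq> (0, 0, 0, 0) \<and> P (vector [c1, c2, c3, c4])) \<longleftrightarrow>
   (\<exists>c::'a::zero^4. c \<noteq> 0 \<and> P c)"
proof
  assume "\<exists>c1 c2 c3 c4. (c1, c2, c3, c4) \<noteq> (0, 0, 0, 0) \<and> P (vector [c1, c2, c3, c4])"
  then obtain c1 c2 c3 c4 :: 'a where "(c1, c2, c3, c4) \<noteq> (0, 0, 0, 0)" "P (vector [c1, c2, c3, c4])"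
    by blast
  moreover from this(1) have "(vector [c1, c2, c3, c4] :: 'a^4) \<noteq> 0"
    by (auto simp: vec_eq_iff forall_4)
  ultimately show "\<exists>c::'a^4. c \<noteq> 0 \<and> P c"
    by blast
next
  assume "\<exists>c::'a^4. c \<noteq> 0 \<and> P c"
  then obtain c :: "'a^4" where "c \<noteq> 0" "P c"
    by blast
  moreover have "vector [c$1, c$2, c$3, c$4] = c"
    by (simp add: vec_eq_iff forall_4)
  moreover from \<open>c \<noteq> 0\<close> have "(c$1, c$2, c$3, c$4) \<noteq> (0, 0, 0, 0)"
    by (auto simp: vec_eq_iff forall_4)
  ultimately show "\<exists>c1 c2 c3 c4. (c1, c2, c3, c4) \<noteq> (0, 0, 0, 0) \<and> P (vector [c1, c2, c3, c4])"
    by (intro exI[of _ "c$1"] exI[of _ "c$2"] exI[of _ "c$3"] exI[of _ "c$4"]) simp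
qed

lemma det_4:
  "det (A::'a::comm_ring_1^4^4) = A$1$1 * A$2$2 * A$3$3 * A$4$4 - A$1$1 * A$2$2 * A$3$4 * A$4$3 - A$1$1 * A$2$3 * A$3$2 * A$4$4 + A$1$1 * A$2$3 * A$3$4 * A$4$2 + A$1$1 * A$2$4 * A$3$2 * A$4$3 - A$1$1 * A$2$4 * A$3$3 * A$4$2 - A$1$2 * A$2$1 * A$3$3 * A$4$4 + A$1$2 * A$2$1 * A$3$4 * A$4$3 + A$1$2 * A$2$3 * A$3$1 * A$4$4 - A$1$2 * A$2$3 * A$3$4 * A$4$1 - A$1$2 * A$2$4 * A$3$1 * A$4$3 + A$1$2 * A$2$4 * A$3$3 * A$4$1 + A$1$3 * A$2$1 * A$3$2 * A$4$4 - A$1$3 * A$2$1 * A$3$4 * A$4$2 - A$1$3 * A$2$2 * A$3$1 * A$4$4 + A$1$3 * A$2$2 * A$3$4 * A$4$1 + A$1$3 * A$2$4 * A$3$1 * A$4$2 - A$1$3 * A$2$4 * A$3$2 * A$4$1 - A$1$4 * A$2$1 * A$3$2 * A$4$3 + A$1$4 * A$2$1 * A$3$3 * A$4$2 + A$1$4 * A$2$2 * A$3$1 * A$4$3 - A$1$4 * A$2$2 * A$3$3 * A$4$1 - A$1$4 * A$2$3 * A$3$1 * A$4$2 + A$1$4 * A$2$3 * A$3$2 * A$4$1"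
proof -
  have f1: "finite {2::4, 3, 4}" "1 \<notin> {2::4, 3, 4}" by auto
  have f2: "finite {3::4, 4}" "2 \<notin> {3::4, 4}" by auto
  have f3: "finite {4::4}" "3 \<notin> {4::4}" by auto
  show ?thesis
    unfolding det_def UNIV_4
    unfolding sum_over_permutations_insert[OF f1]
    unfolding sum_over_permutations_insert[OF f2]
    unfolding sum_over_permutations_insert[OF f3]
    unfolding permutes_sing
    by (simp add: sign_swap_id permutation_swap_id permutation_compose sign_compose sign_id swap_id_eq algebra_simps)
qed

lemma matrix_vector_mult_eq_0_iff: "A *v x = 0 \<longleftrightarrow> (\<forall>i. scalar_product (A $ i) x = 0)"
  by (simp add: vec_eq_iff matrix_vector_mult_def scalar_product_def)

lemma subspace_scalar_product_eq_0:
  "vec.subspace {r :: 'a::field^'n. scalar_product r x = 0}"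
  by (auto simp: vec.subspace_def scalar_product_def algebra_simps sum.distrib simp flip: sum_distrib_left)

lemma det_eq_0_if_nontrivial_kernel:
  fixes A :: "'a::field^'n^'n"
  assumes "A *v x = 0" "x \<noteq> 0"
  shows "det A = 0"
  using assms invertible_det_nz invertible_left_inverse matrix_left_invertible_ker by metis

lemma det_ne_0_if_rows_span:
  fixes A :: "'a::field^'n^'n"
  assumes "vec.span (rows A) = UNIV"
  shows "det A \<noteq> 0"
  using assms matrix_left_invertible_span_rows_gen invertible_left_inverse invertible_det_nz by metis

lemma exists_annihilator_if_not_spanning:
  fixes S :: "('a::field^'n) set"
  assumes "vec.span S \<noteq> UNIV"
  obtains x where "x \<noteq> 0" "\<forall>r\<in>S. scalar_product r x = 0"
proof -
  obtain B where "B \<subseteq> S" "vec.independent B" "S \<subseteq> vec.span B"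
    using vec.maximal_independent_subset by blast
  then have span_B: "vec.span B = vec.span S"
    by (meson vec.span_eq vec.span_superset order_trans)
  have "finite B" "card B \<le> CARD('n)"
    using \<open>vec.independent B\<close> vec.finiteI_independent vec.independent_card_le_dim[of B UNIV]
    by (simp_all add: card_cart_basis)
  then obtain g :: "_ \<Rightarrow> 'n" where "inj_on g B"
    using card_le_inj[of B "UNIV :: 'n set"] by auto
  define A :: "'a^'n^'n" where "A = (\<chi> i. if i \<in> g ` B then the_inv_into B g i else 0)"
  have row_A: "row (g b) A = b" if "b \<in> B" for b
    using that \<open>inj_on g B\<close> by (simp add: A_def row_def the_inv_into_f_f vec_lambda_eta)
  have "B \<subseteq> rows A"
    unfolding rows_def using row_A by (metis (mono_tags, lifting) UNIV_I mem_Collect_eq subsetI)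
  moreover have "rows A \<subseteq> insert 0 B"
    using \<open>inj_on g B\<close> by (auto simp: rows_def row_def A_def the_inv_into_into vec_lambda_eta)
  ultimately have "vec.span (rows A) = vec.span B"
    by (metis vec.span_insert_0 vec.span_mono subset_antisym)
  then obtain x where "x \<noteq> 0" "A *v x = 0"
    using assms span_B matrix_left_invertible_span_rows_gen matrix_left_invertible_ker by metis
  then have "B \<subseteq> {r. scalar_product r x = 0}"
    using row_A by (auto simp: matrix_vector_mult_eq_0_iff row_def vec_lambda_eta) metis
  then have "vec.span B \<subseteq> {r. scalar_product r x = 0}"
    by (rule vec.span_minimal[OF _ subspace_scalar_product_eq_0])
  then show ?thesis
    using that \<open>x \<noteq> 0\<close> \<open>S \<subseteq> vec.span B\<close> by blast
qed

lemma exists_nonzero_minor_if_spanning: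
  fixes R :: "nat \<Rightarrow> 'a::field^4"
  assumes "vec.span (R ` {..<N}) = UNIV"
  obtains i j k l where "i < j" "j < k" "k < l" "l < N" "det (vector [R i, R j, R k, R l]) \<noteq> 0"
proof -
  obtain B where "B \<subseteq> R ` {..<N}" "vec.independent B" "R ` {..<N} \<subseteq> vec.span B"
    using vec.maximal_independent_subset by blast
  then have span_B: "vec.span B = UNIV"
    using assms by (metis vec.span_eq vec.span_superset order_trans)
  then have "card B = 4"
    using vec.basis_card_eq_dim[of B UNIV] \<open>vec.independent B\<close> by (simp add: card_cart_basis)
  obtain I where "I \<subseteq> {..<N}" "inj_on R I" "B = R ` I"
    using subset_image_inj \<open>B \<subseteq> R ` {..<N}\<close> by metis
  then have "card I = 4"
    using \<open>card B = 4\<close> card_image by metis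
  then have "finite I"
    using card.infinite by fastforce
  define xs where "xs = sorted_list_of_set I"
  have "length xs = 4" "sorted_wrt (<) xs" "set xs = I"
    using \<open>card I = 4\<close> \<open>finite I\<close> by (simp_all add: xs_def)
  then obtain i j k l where xs: "xs = [i, j, k, l]"
    by (auto simp: numeral_eq_Suc length_Suc_conv)
  show ?thesis
  proof (rule that)
    show "i < j" "j < k" "k < l"
      using \<open>sorted_wrt (<) xs\<close> xs by simp_all
    show "l < N"
      using \<open>set xs = I\<close> \<open>I \<subseteq> {..<N}\<close> xs by auto
    have "I = {i, j, k, l}"
      using \<open>set xs = I\<close> xs by simp
    then have "rows (vector [R i, R j, R k, R l] :: 'a^4^4) = B"
      using \<open>B = R ` I\<close> by (simp add: rows_vector_4)
    then show "det (vector [R i, R j, R k, R l] :: 'a^4^4) \<noteq> 0"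
      using span_B det_ne_0_if_rows_span by metis
  qed
qed

lemma annihilator_iff_minors_vanish:
  fixes R :: "nat \<Rightarrow> 'a::field^4"
  shows "(\<exists>x. x \<noteq> 0 \<and> (\<forall>l<N. scalar_product (R l) x = 0)) \<longleftrightarrow>
         (\<forall>i j k l. i < j \<longrightarrow> j < k \<longrightarrow> k < l \<longrightarrow> l < N \<longrightarrow>
            det (vector [R i, R j, R k, R l] :: 'a^4^4) = 0)"
proof
  assume "\<exists>x. x \<noteq> 0 \<and> (\<forall>l<N. scalar_product (R l) x = 0)"
  then obtain x where "x \<noteq> 0" and x: "\<forall>l<N. scalar_product (R l) x = 0"
    by blast
  show "\<forall>i j k l. i < j \<longrightarrow> j < k \<longrightarrow> k < l \<longrightarrow> l < N \<longrightarrow>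
          det (vector [R i, R j, R k, R l] :: 'a^4^4) = 0"
  proof (intro allI impI)
    fix i j k l :: nat
    assume "i < j" "j < k" "k < l" "l < N"
    then have "(vector [R i, R j, R k, R l] :: 'a^4^4) *v x = 0"
      using x by (simp add: matrix_vector_mult_eq_0_iff forall_4)
    then show "det (vector [R i, R j, R k, R l] :: 'a^4^4) = 0"
      using \<open>x \<noteq> 0\<close> by (rule det_eq_0_if_nontrivial_kernel)
  qed
next
  assume minors: "\<forall>i j k l. i < j \<longrightarrow> j < k \<longrightarrow> k < l \<longrightarrow> l < N \<longrightarrow>
            det (vector [R i, R j, R k, R l] :: 'a^4^4) = 0"
  have "vec.span (R ` {..<N}) \<noteq> UNIV"
    using exists_nonzero_minor_if_spanning minors by metis
  then obtain x where "x \<noteq> 0" "\<forall>r\<in>R ` {..<N}. scalar_product r x = 0"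
    by (rule exists_annihilator_if_not_spanning)
  then show "\<exists>x. x \<noteq> 0 \<and> (\<forall>l<N. scalar_product (R l) x = 0)"
    by auto
qed

lemma bracket_eq_det: "bracket a b c X = det (vector [a, b, c, X])"
  unfolding bracket_def by (metis det_transpose transpose_def)

definition mixed_monomial :: "nat \<Rightarrow> 'a::comm_ring_1^4 \<Rightarrow> 'a" where
  "mixed_monomial l X = [X$1 * X$2, X$1 * X$3, X$1 * X$4, X$2 * X$3, X$2 * X$4, X$3 * X$4] ! l"

lemma mixed_monomials_independent:
  fixes c :: "nat \<Rightarrow> 'a::comm_ring_1"
  assumes "\<forall>X::'a^4. (\<Sum>l<6. c l * mixed_monomial l X) = 0" and "l < 6"
  shows "c l = 0"
proof -
  have "c 0 = 0" "c 1 = 0" "c 2 = 0" "c 3 = 0" "c 4 = 0" "c 5 = 0"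
    using assms(1)[rule_format, of "vector [1, 1, 0, 0]"] assms(1)[rule_format, of "vector [1, 0, 1, 0]"]
      assms(1)[rule_format, of "vector [1, 0, 0, 1]"] assms(1)[rule_format, of "vector [0, 1, 1, 0]"]
      assms(1)[rule_format, of "vector [0, 1, 0, 1]"] assms(1)[rule_format, of "vector [0, 0, 1, 1]"]
    by (simp_all add: mixed_monomial_def numeral_eq_Suc)
  then show ?thesis
    using \<open>l < 6\<close> by (auto simp: numeral_eq_Suc less_Suc_eq)
qed

text \<open>Row l lists the coefficients of the l-th mixed monomial in the four products of
  brackets of the theorem, where a and b represent the points 4 and 5.\<close>

definition coeff_row :: "complex^4 \<Rightarrow> complex^4 \<Rightarrow> nat \<Rightarrow> complex^4" where
  "coeff_row a b = nth
    [vector [0, 0, a$4 * b$3, a$4 * b$3 - a$3 * b$4],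
     vector [a$2 * b$4, 0, 0, a$2 * b$4 - a$4 * b$2],
     vector [- a$2 * b$3, a$3 * b$2 - a$2 * b$3, - a$2 * b$3, a$3 * b$2 - a$2 * b$3],
     vector [- a$1 * b$4, 0, - a$4 * b$1, 0],
     vector [a$1 * b$3, a$1 * b$3 - a$3 * b$1, 0, 0],
     vector [0, a$2 * b$1 - a$1 * b$2, a$2 * b$1, 0]]"

lemma bracket_quadrics_expansion:
  fixes a b X :: "complex^4"
  defines "e0 \<equiv> vector [1, 0, 0, 0]" and "e1 \<equiv> vector [0, 1, 0, 0]"
      and "e2 \<equiv> vector [0, 0, 1, 0]" and "e3 \<equiv> vector [0, 0, 0, 1]"
  shows "c1 * (bracket e0 e1 b X * bracket e2 e3 a X) + c2 * (bracket e0 e1 e2 X * bracket e3 a b X)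
       + c3 * (bracket e0 e2 a X * bracket e1 e3 b X) + c4 * (bracket e0 a b X * bracket e1 e2 e3 X)
       = (\<Sum>l<6. scalar_product (coeff_row a b l) (vector [c1, c2, c3, c4]) * mixed_monomial l X)"
  unfolding bracket_eq_det det_4 e0_def e1_def e2_def e3_def
  by (simp add: numeral_eq_Suc coeff_row_def mixed_monomial_def scalar_product_def sum_4 algebra_simps)

lemma lin_dep4_bracket_quadrics_iff:
  fixes a b :: "complex^4"
  defines "e0 \<equiv> vector [1, 0, 0, 0]" and "e1 \<equiv> vector [0, 1, 0, 0]"
      and "e2 \<equiv> vector [0, 0, 1, 0]" and "e3 \<equiv> vector [0, 0, 0, 1]"
  shows "lin_dep4 (\<lambda>X. bracket e0 e1 b X * bracket e2 e3 a X)
                  (\<lambda>X. bracket e0 e1 e2 X * bracket e3 a b X)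
                  (\<lambda>X. bracket e0 e2 a X * bracket e1 e3 b X)
                  (\<lambda>X. bracket e0 a b X * bracket e1 e2 e3 X)
         \<longleftrightarrow> (\<exists>c. c \<noteq> 0 \<and> (\<forall>l<6. scalar_product (coeff_row a b l) c = 0))"
proof -
  have "lin_dep4 (\<lambda>X. bracket e0 e1 b X * bracket e2 e3 a X)
                  (\<lambda>X. bracket e0 e1 e2 X * bracket e3 a b X)
                  (\<lambda>X. bracket e0 e2 a X * bracket e1 e3 b X)
                  (\<lambda>X. bracket e0 a b X * bracket e1 e2 e3 X)
     \<longleftrightarrow> (\<exists>c::complex^4. c \<noteq> 0 \<and>
            (\<forall>X::complex^4. (\<Sum>l<6. scalar_product (coeff_row a b l) c * mixed_monomial l X) = 0))"
    unfolding lin_dep4_def e0_def e1_def e2_def e3_def bracket_quadrics_expansion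
    by (rule ex_nonzero_vector_4)
  also have "\<dots> \<longleftrightarrow> (\<exists>c. c \<noteq> 0 \<and> (\<forall>l<6. scalar_product (coeff_row a b l) c = 0))"
    using mixed_monomials_independent[where c = "\<lambda>l. scalar_product (coeff_row a b l) _"] by auto
  finally show ?thesis .
qed

definition dependency_polynomial :: "complex^4 \<Rightarrow> complex^4 \<Rightarrow> complex" where
  "dependency_polynomial a b =
     - b$1 * a$2 * b$3 * a$4 + a$1 * b$2 * b$3 * a$4 + b$1 * a$2 * a$3 * b$4 - a$1 * a$2 * b$3 * b$4"

definition coeff_minor :: "complex^4 \<Rightarrow> complex^4 \<Rightarrow> nat \<Rightarrow> nat \<Rightarrow> nat \<Rightarrow> nat \<Rightarrow> complex" where
  "coeff_minor a b i j k l =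
     det (vector [coeff_row a b i, coeff_row a b j, coeff_row a b k, coeff_row a b l])"

lemma increasing_quadruples_below_6:
  fixes i j k l :: nat
  assumes "i < j" "j < k" "k < l" "l < 6"
  shows "(i, j, k, l) \<in> {(0,1,2,3), (0,1,2,4), (0,1,2,5), (0,1,3,4), (0,1,3,5), (0,1,4,5), (0,2,3,4),
    (0,2,3,5), (0,2,4,5), (0,3,4,5), (1,2,3,4), (1,2,3,5), (1,2,4,5), (1,3,4,5), (2,3,4,5)}"
proof -
  have "i = 0 \<or> i = 1 \<or> i = 2" "j = 1 \<or> j = 2 \<or> j = 3"
       "k = 2 \<or> k = 3 \<or> k = 4" "l = 3 \<or> l = 4 \<or> l = 5"
    using assms by linarith+
  then show ?thesis
    using assms by (elim disjE) simp_all
qed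

lemma coeff_minor_factorizations:
  fixes a b :: "complex^4"
  defines "Q \<equiv> dependency_polynomial a b"
  shows "coeff_minor a b 0 1 2 3 = Q * (a$4 * b$4 * (a$2 * b$3 - a$3 * b$2))"
    and "coeff_minor a b 0 1 2 4 = Q * (a$3 * b$3 * (a$4 * b$2 - a$2 * b$4))"
    and "coeff_minor a b 0 1 2 5 = Q * (a$2 * b$2 * (a$3 * b$4 - a$4 * b$3))"
    and "coeff_minor a b 0 1 3 4 = Q * (a$4 * b$4 * (a$1 * b$3 - a$3 * b$1))"
    and "coeff_minor a b 0 1 3 5 = Q * (a$4 * b$4 * (a$2 * b$1 - a$1 * b$2))"
    and "coeff_minor a b 0 1 4 5 = Q * (a$1 * a$4 * b$2 * b$3 - a$2 * a$3 * b$1 * b$4)"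
    and "coeff_minor a b 0 2 3 4 = Q * (a$3 * b$3 * (a$4 * b$1 - a$1 * b$4))"
    and "coeff_minor a b 0 2 3 5 = Q * (a$1 * a$3 * b$2 * b$4 - a$2 * a$4 * b$1 * b$3)"
    and "coeff_minor a b 0 2 4 5 = Q * (a$3 * b$3 * (a$2 * b$1 - a$1 * b$2))"
    and "coeff_minor a b 0 3 4 5 = Q * (a$1 * b$1 * (a$3 * b$4 - a$4 * b$3))"
    and "coeff_minor a b 1 2 3 4 = Q * (a$1 * a$2 * b$3 * b$4 - a$3 * a$4 * b$1 * b$2)"
    and "coeff_minor a b 1 2 3 5 = Q * (a$2 * b$2 * (a$4 * b$1 - a$1 * b$4))"
    and "coeff_minor a b 1 2 4 5 = Q * (a$2 * b$2 * (a$1 * b$3 - a$3 * b$1))"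
    and "coeff_minor a b 1 3 4 5 = Q * (a$1 * b$1 * (a$4 * b$2 - a$2 * b$4))"
    and "coeff_minor a b 2 3 4 5 = Q * (a$1 * b$1 * (a$2 * b$3 - a$3 * b$2))"
  unfolding Q_def coeff_minor_def det_4 coeff_row_def dependency_polynomial_def
  by (simp_all add: algebra_simps)

lemma coeff_minor_eq_0_if_dependency_polynomial_eq_0:
  fixes a b :: "complex^4"
  assumes "dependency_polynomial a b = 0" and "i < j" "j < k" "k < l" "l < 6"
  shows "coeff_minor a b i j k l = 0"
  using increasing_quadruples_below_6[OF assms(2-5)] assms(1)
  by (auto simp only: insert_iff empty_iff prod.inject coeff_minor_factorizations mult_zero_left)

text \<open>By coeff_minor_factorizations these minors are Q times seven cofactors, and Q^3 (though
  not Q) lies in the ideal generated by the cofactors: both summands of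
  Q = w4 z5 (x4 y5 - y4 x5) - y4 w5 (x4 z5 - z4 x5) have their squares in it.\<close>

lemma dependency_polynomial_eq_0_if_minors_vanish:
  fixes a b :: "complex^4"
  assumes "coeff_minor a b 0 1 3 4 = 0" "coeff_minor a b 0 1 3 5 = 0" "coeff_minor a b 0 1 4 5 = 0"
      and "coeff_minor a b 0 2 3 5 = 0" "coeff_minor a b 0 2 4 5 = 0" "coeff_minor a b 1 2 3 4 = 0"
      and "coeff_minor a b 1 2 4 5 = 0"
  shows "dependency_polynomial a b = 0"
  using assms unfolding coeff_minor_factorizations dependency_polynomial_def by algebra

lemma coeff_minors_vanish_iff:
  fixes a b :: "complex^4"
  shows "(\<forall>i j k l. i < j \<longrightarrow> j < k \<longrightarrow> k < l \<longrightarrow> l < 6 \<longrightarrow> coeff_minor a b i j k l = 0)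
         \<longleftrightarrow> dependency_polynomial a b = 0"
proof
  assume "\<forall>i j k l. i < j \<longrightarrow> j < k \<longrightarrow> k < l \<longrightarrow> l < 6 \<longrightarrow> coeff_minor a b i j k l = 0"
  then show "dependency_polynomial a b = 0"
    by (intro dependency_polynomial_eq_0_if_minors_vanish) simp_all
next
  assume "dependency_polynomial a b = 0"
  then show "\<forall>i j k l. i < j \<longrightarrow> j < k \<longrightarrow> k < l \<longrightarrow> l < 6 \<longrightarrow> coeff_minor a b i j k l = 0"
    using coeff_minor_eq_0_if_dependency_polynomial_eq_0 by blast
qed

theorem mainTheorem3:
  fixes x4 y4 z4 w4 x5 y5 z5 w5 :: complex
  assumes "(x4, y4, z4, w4) \<noteq> (0, 0, 0, 0)"
      and "(x5, y5, z5, w5) \<noteq> (0, 0, 0, 0)"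
  defines "p0 \<equiv> (vector [1, 0, 0, 0] :: complex^4)"
      and "p1 \<equiv> (vector [0, 1, 0, 0] :: complex^4)"
      and "p2 \<equiv> (vector [0, 0, 1, 0] :: complex^4)"
      and "p3 \<equiv> (vector [0, 0, 0, 1] :: complex^4)"
      and "p4 \<equiv> (vector [x4, y4, z4, w4] :: complex^4)"
      and "p5 \<equiv> (vector [x5, y5, z5, w5] :: complex^4)"
  shows "lin_dep4 (\<lambda>X. bracket p0 p1 p5 X * bracket p2 p3 p4 X)
                  (\<lambda>X. bracket p0 p1 p2 X * bracket p3 p4 p5 X)
                  (\<lambda>X. bracket p0 p2 p4 X * bracket p1 p3 p5 X)
                  (\<lambda>X. bracket p0 p4 p5 X * bracket p1 p2 p3 X)
         \<longleftrightarrow> - x5 * y4 * z5 * w4 + x4 * y5 * z5 * w4 + x5 * y4 * z4 * w5 - x4 * y4 * z5 * w5 = 0"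
  unfolding p0_def p1_def p2_def p3_def lin_dep4_bracket_quadrics_iff
    annihilator_iff_minors_vanish coeff_minor_def[symmetric] coeff_minors_vanish_iff
  by (simp add: dependency_polynomial_def p4_def p5_def)

end
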